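(* Assume Hypothesis (LD). Assume the $\rho$-basic classes contained in $M_1$ are finitely many, $K_1,\dots,K_v$, each closed. Let $K_j$ be one of them which is not a $\rho$-quasiattractor. Then there exists $\eta>0$ with the following property. For every $\gamma>0$ there exist $\varepsilon_0>0$ and a function $\zeta:(0,\varepsilon_0)\to[0,1]$ with $\lim_{\varepsilon\to0}\zeta(\varepsilon)=0$ such that $$\sup_{x\in N^\eta(K_j)}\mathbb{P}_x\big[\tau^\varepsilon_{N^\eta(K_j)}>e^{\gamma/\varepsilon}\big]\le\zeta(\varepsilon)\quad\text{for all }\varepsilon<\varepsilon_0.$$ Here $\tau^\varepsilon_V=\inf\{n\ge0:X^\varepsilon_n\notin V\}$.
   Context: Setting. Let $M\subset\mathbb{R}^d$ be closed; all topological notions are relative to $M$. Let $F:M\to M$ be continuous with $\|F\|:=\sup_{x\in M}\|F(x)\|<\infty$. For $A\subset M$ and $\delta>0$, put $N^\delta(A)=\{x\in M:\inf_{y\in A}\|x-y\|<\delta\}$, and let $d(x,y)=\max_i|x_i-y_i|$. Let $\{X^\varepsilon\}_{\varepsilon>0}$ be a family of time-homogeneous Markov chains on $M$ with transition kernels $p^\varepsilon(x,\Gamma)$. $\mathbb{P}_x$ is the law of the chain with $X^\varepsilon_0=x$. Assume $M=M_0\cup M_1$ (disjoint), where $M_0$ is closed, $F(M_0)\subseteq M_0$, $F(M_1)\subseteq M_1$, and $p^\varepsilon(x,M_1)=0$ for all $\varepsilon>0$ and $x\in M_0$. $\rho$-chain recurrence. Given $\rho:M\times M\to[0,+\infty]$,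 for $\xi=(\xi_0,\dots,\xi_n)\in M^{n+1}$ set $A_n(\xi)=\sum_{i=0}^{n-1}\rho(\xi_i,\xi_{i+1})$. Set $B_\rho(x,y)=\inf\{A_n(\xi):n\ge1,\ \xi\in M^{n+1},\ \xi_0=x,\ \xi_n=y\}$. Write $x<_\rho y$ if $B_\rho(x,y)=0$, and $x\sim_\rho y$ if $x<_\rho y$ and $y<_\rho x$. Let $\mathcal{R}_\rho=\{x:x\sim_\rho x\}$. The $\rho$-basic classes are the equivalence classes $[x]_\rho$ of $\sim_\rho$ on $\mathcal{R}_\rho$. Write $[x]_\rho<_\rho[y]_\rho$ if $x<_\rho y$. A $\rho$-quasiattractor is a maximal $\rho$-basic class. Hypothesis (LD). There is $\rho:M\times M\to[0,+\infty]$ such that: (i) $\rho$ is continuous on $M_1\times M$; (ii) $\rho(x,y)=0$ iff $y=F(x)$; (iii) for every $\beta>0$, $\inf\{\rho(x,y):x,y\in M,\ d(F(x),y)>\beta\}>0$; (iv) lower bound: for every compact $K\subset M_1$, every open ball $U$ of $M$ and every $\eta>0$, there is $\varepsilon_0>0$ such that $\varepsilon\log p^\varepsilon(x,U)\ge-\inf_{y\in U}\rho(x,y)-\eta$ for all $x\in K$ and $\varepsilon<\varepsilon_0$; (v) upper bound: for every closed $C\subset M$ and every $\eta>0$, there is $\varepsilon_0>0$ such that $\varepsilon\log p^\varepsilon(x,C)\le-\inf_{y\in C}\rho(x,y)+\eta$ for all $x\in M$ and $\varepsilon<\varepsilon_0$. *)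

theory Defs
  imports "HOL-Probability.Probability"
begin

definition dmax :: "real^'n \<Rightarrow> real^'n \<Rightarrow> real" where
  "dmax x y = Max (range (\<lambda>i. \<bar>x$i - y$i\<bar>))"

definition nbhd :: "'a::metric_space set \<Rightarrow> real \<Rightarrow> 'a set \<Rightarrow> 'a set" where
  "nbhd M \<delta> A = {x\<in>M. (INF y\<in>A. ereal (dist x y)) < ereal \<delta>}"

definition chain_cost :: "('a \<Rightarrow> 'a \<Rightarrow> ennreal) \<Rightarrow> (nat \<Rightarrow> 'a) \<Rightarrow> nat \<Rightarrow> ennreal" where
  "chain_cost \<rho> \<xi> n = (\<Sum>i<n. \<rho> (\<xi> i) (\<xi> (Suc i)))"

definition B_rho :: "'a set \<Rightarrow> ('a \<Rightarrow> 'a \<Rightarrow> ennreal) \<Rightarrow> 'a \<Rightarrow> 'a \<Rightarrow> ennreal" where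
  "B_rho M \<rho> x y = (INF (n, \<xi>)\<in>{(n, \<xi>). n \<ge> 1 \<and> (\<forall>i\<le>n. \<xi> i \<in> M) \<and> \<xi> 0 = x \<and> \<xi> n = y}.
       chain_cost \<rho> \<xi> n)"

definition rho_le :: "'a set \<Rightarrow> ('a \<Rightarrow> 'a \<Rightarrow> ennreal) \<Rightarrow> 'a \<Rightarrow> 'a \<Rightarrow> bool" where
  "rho_le M \<rho> x y \<longleftrightarrow> B_rho M \<rho> x y = 0"

definition rho_sim :: "'a set \<Rightarrow> ('a \<Rightarrow> 'a \<Rightarrow> ennreal) \<Rightarrow> 'a \<Rightarrow> 'a \<Rightarrow> bool" where
  "rho_sim M \<rho> x y \<longleftrightarrow> rho_le M \<rho> x y \<and> rho_le M \<rho> y x"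

definition rho_recurrent :: "'a set \<Rightarrow> ('a \<Rightarrow> 'a \<Rightarrow> ennreal) \<Rightarrow> 'a set" where
  "rho_recurrent M \<rho> = {x\<in>M. rho_sim M \<rho> x x}"

definition rho_class :: "'a set \<Rightarrow> ('a \<Rightarrow> 'a \<Rightarrow> ennreal) \<Rightarrow> 'a \<Rightarrow> 'a set" where
  "rho_class M \<rho> x = {y \<in> rho_recurrent M \<rho>. rho_sim M \<rho> x y}"

definition basic_class :: "'a set \<Rightarrow> ('a \<Rightarrow> 'a \<Rightarrow> ennreal) \<Rightarrow> 'a set \<Rightarrow> bool" where
  "basic_class M \<rho> K \<longleftrightarrow> (\<exists>x\<in>rho_recurrent M \<rho>. K = rho_class M \<rho> x)"

text \<open>[x] <_rho [y] iff x <_rho y (independent of representatives).\<close>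
definition class_le :: "'a set \<Rightarrow> ('a \<Rightarrow> 'a \<Rightarrow> ennreal) \<Rightarrow> 'a set \<Rightarrow> 'a set \<Rightarrow> bool" where
  "class_le M \<rho> K K' \<longleftrightarrow> (\<exists>x\<in>K. \<exists>y\<in>K'. rho_le M \<rho> x y)"

definition quasiattractor :: "'a set \<Rightarrow> ('a \<Rightarrow> 'a \<Rightarrow> ennreal) \<Rightarrow> 'a set \<Rightarrow> bool" where
  "quasiattractor M \<rho> K \<longleftrightarrow> basic_class M \<rho> K \<and>
     (\<forall>K'. basic_class M \<rho> K' \<and> class_le M \<rho> K K' \<longrightarrow> K' = K)"

text \<open>stay_prob p V n x = P_x[X_0 \<in> V, ..., X_n \<in> V] for the Markov chain with kernel p.\<close>
fun stay_prob :: "('a \<Rightarrow> 'a measure) \<Rightarrow> 'a set \<Rightarrow> nat \<Rightarrow> 'a \<Rightarrow> real" where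
  "stay_prob p V 0 x = indicator V x"
| "stay_prob p V (Suc n) x = indicator V x * (\<integral>y. stay_prob p V n y \<partial>(p x))"

text \<open>P_x[tau_V > t] for real t \<ge> 0: the chain stays in V at all times n \<le> t.\<close>
definition exit_later :: "('a \<Rightarrow> 'a measure) \<Rightarrow> 'a set \<Rightarrow> real \<Rightarrow> 'a \<Rightarrow> real" where
  "exit_later p V t x = stay_prob p V (nat \<lfloor>t\<rfloor>) x"

end

theory Submission
  imports Defs "HOL-Real_Asymp.Real_Asymp"
begin

text \<open>
  Let S be a small closed neighbourhood of Kj in M that lies in M1 and meets no
  other basic class of M1, and V the open neighbourhood N^eta(Kj).  Every z \<in> S can leave S
  at zero rho-chain cost: either its F-orbit leaves S, or the orbit accumulates at a
  rho-recurrent point of S, whose class (Kj or a class leaving S) leads out of S because Kj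
  is not maximal.  Hence from every z \<in> S a chain of arbitrarily small cost leads out of S,
  and the lower large-deviation bound (LD)(iv) turns such a chain into an escape
  probability at least exp(-delta/epsilon) within a bounded number of steps.  Compactness
  of S makes this uniform, and iterating the Markov property yields that the process stays
  in V for exp(gamma/epsilon) steps only with probability tending to 0.
\<close>

section \<open>Survival probabilities of a sub-Markov kernel\<close>

lemma subprob_integral_unit_interval:
  assumes "subprob_space N" "f \<in> borel_measurable N" "\<And>x. 0 \<le> f x" "\<And>x. f x \<le> (1::real)"
  shows "integrable N f" "0 \<le> integral\<^sup>L N f" "integral\<^sup>L N f \<le> 1"
proof -
  interpret subprob_space N by fact
  show int: "integrable N f"
    by (rule integrable_const_bound[where B=1]) (use assms in auto)
  show "0 \<le> integral\<^sup>L N f" using assms by (auto intro: integral_nonneg_AE)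
  have "integral\<^sup>L N f \<le> integral\<^sup>L N (\<lambda>x. 1)"
    by (rule integral_mono[OF int]) (use assms in auto)
  also have "\<dots> \<le> 1" using subprob_measure_le_1 by simp
  finally show "integral\<^sup>L N f \<le> 1" .
qed

locale stay_kernel =
  fixes P :: "'a::topological_space \<Rightarrow> 'a measure" and V :: "'a set"
  assumes P_meas: "P \<in> borel \<rightarrow>\<^sub>M subprob_algebra borel"
    and V_borel: "V \<in> sets borel"
begin

lemma subprob_P: "subprob_space (P x)"
  using subprob_space_kernel[OF P_meas] by simp

lemma sets_P: "sets (P x) = sets borel"
  using sets_kernel[OF P_meas] by simp

lemma stay_prob_borel: "stay_prob P V n \<in> borel_measurable borel"
proof (induction n)
  case 0
  then show ?case using V_borel by simp
next
  case (Suc n)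
  have "(\<lambda>x. integral\<^sup>L (P x) (stay_prob P V n)) \<in> borel_measurable borel"
    by (rule measurable_compose[OF P_meas integral_measurable_subprob_algebra[OF Suc]])
  then show ?case using V_borel by simp
qed

lemma stay_prob_measurable: "stay_prob P V n \<in> borel_measurable (P x)"
  using stay_prob_borel measurable_cong_sets[OF sets_P refl] by blast

lemma stay_prob_unit_interval: "0 \<le> stay_prob P V n x \<and> stay_prob P V n x \<le> 1"
proof (induction n arbitrary: x)
  case 0
  then show ?case by (simp add: indicator_def)
next
  case (Suc n)
  note int = subprob_integral_unit_interval[OF subprob_P stay_prob_measurable]
  show ?case using int(2,3) Suc by (auto simp: indicator_def)
qed

lemma stay_prob_nonneg: "0 \<le> stay_prob P V n x"
  and stay_prob_le_1: "stay_prob P V n x \<le> 1"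
  using stay_prob_unit_interval by auto

lemma stay_prob_integrable: "integrable (P x) (stay_prob P V n)"
  using subprob_integral_unit_interval(1)[OF subprob_P stay_prob_measurable] stay_prob_unit_interval
  by blast

lemma stay_prob_outside: "x \<notin> V \<Longrightarrow> stay_prob P V n x = 0"
  by (cases n) auto

text \<open>Markov property in integrated form: if staying n steps has probability at most c
  from every point, then staying m + n steps costs an extra factor c.\<close>
lemma stay_prob_add:
  assumes c: "\<And>y. stay_prob P V n y \<le> c"
  shows "stay_prob P V (m + n) x \<le> c * stay_prob P V m x"
proof (induction m arbitrary: x)
  case 0
  show ?case
    using c[of x] stay_prob_outside[of x n] by (cases "x \<in> V") auto
next
  case (Suc m)
  have "integral\<^sup>L (P x) (stay_prob P V (m + n)) \<le> integral\<^sup>L (P x) (\<lambda>y. c * stay_prob P V m y)"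
    by (rule integral_mono[OF stay_prob_integrable]) (use Suc stay_prob_integrable in auto)
  then show ?case by (auto simp: indicator_def)
qed

lemma stay_prob_antimono:
  assumes "n \<le> m" shows "stay_prob P V m x \<le> stay_prob P V n x"
proof -
  obtain k where "m = n + k" using assms le_Suc_ex by blast
  then show ?thesis
    using stay_prob_add[of k 1 n x] stay_prob_le_1 by simp
qed

lemma stay_prob_power:
  assumes c: "\<And>y. stay_prob P V L y \<le> c"
  shows "stay_prob P V (k * L) x \<le> c ^ k"
proof (induction k arbitrary: x)
  case 0
  then show ?case using stay_prob_le_1 by simp
next
  case (Suc k)
  have c0: "0 \<le> c" using c[of x] stay_prob_nonneg[of L x] by linarith
  have "stay_prob P V (Suc k * L) x = stay_prob P V (L + k * L) x" by (simp add: add.commute)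
  also have "\<dots> \<le> c ^ k * stay_prob P V L x" by (rule stay_prob_add) (use Suc in auto)
  also have "\<dots> \<le> c ^ k * c" by (rule mult_left_mono[OF c]) (use c0 in simp)
  finally show ?case by (simp add: mult.commute)
qed

lemma stay_prob_long_time:
  assumes bound: "\<And>y. stay_prob P V L y \<le> 1 - q" and q: "0 < q" "q \<le> 1" and L: "L > 0"
  shows "stay_prob P V N x \<le> exp (1 - q * real N / real L)"
proof -
  define k where "k = N div L"
  have "stay_prob P V N x \<le> stay_prob P V (k * L) x"
    by (rule stay_prob_antimono) (simp add: k_def div_times_less_eq_dividend)
  also have "\<dots> \<le> (1 - q) ^ k" by (rule stay_prob_power[OF bound])
  also have "\<dots> \<le> exp (- q) ^ k"
    by (rule power_mono) (use q exp_ge_add_one_self[of "-q"] in auto)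
  also have "\<dots> = exp (- (q * real k))" by (simp add: exp_of_nat_mult[symmetric] mult.commute)
  also have "\<dots> \<le> exp (1 - q * real N / real L)"
  proof -
    have "N = k * L + N mod L" unfolding k_def by simp
    moreover have "N mod L < L" using L by simp
    ultimately have "real N < (real k + 1) * real L"
      by (metis add_less_mono1 add.commute distrib_right mult_1 of_nat_add of_nat_less_iff of_nat_mult)
    then have "real N / real L < real k + 1" using L by (simp add: field_simps)
    then have "q * (real N / real L) \<le> q * (real k + 1)" using q by (intro mult_left_mono) auto
    then have "q * real N / real L \<le> q * real k + q" by (simp add: algebra_simps)
    then show ?thesis using q by simp
  qed
  finally show ?thesis .
qed

lemma stay_prob_exponential_time:
  assumes escape: "\<And>y. stay_prob P V L y \<le> 1 - exp (- (\<gamma>/2) / \<epsilon>)"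
    and \<gamma>: "\<gamma> > 0" and \<epsilon>: "\<epsilon> > 0" and L: "L > 0"
  shows "stay_prob P V (nat \<lfloor>exp (\<gamma> / \<epsilon>)\<rfloor>) x \<le> exp (1 - (exp (\<gamma> / (2 * \<epsilon>)) - 1) / real L)"
proof -
  define q where "q = exp (- (\<gamma>/2) / \<epsilon>)"
  define N where "N = nat \<lfloor>exp (\<gamma> / \<epsilon>)\<rfloor>"
  have q: "0 < q" "q \<le> 1" unfolding q_def using \<gamma> \<epsilon> by (auto simp: divide_simps)
  have "stay_prob P V N x \<le> exp (1 - q * real N / real L)"
    using escape q L unfolding q_def by (intro stay_prob_long_time) auto
  also have "\<dots> \<le> exp (1 - (exp (\<gamma> / (2 * \<epsilon>)) - 1) / real L)"
  proof -
    have "real N \<ge> exp (\<gamma> / \<epsilon>) - 1" unfolding N_def by linarith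
    then have "q * real N \<ge> q * (exp (\<gamma> / \<epsilon>) - 1)" using q by (intro mult_left_mono) auto
    then have "q * real N \<ge> q * exp (\<gamma> / \<epsilon>) - q" by (simp add: algebra_simps)
    moreover have "q * exp (\<gamma> / \<epsilon>) = exp (\<gamma> / (2 * \<epsilon>))"
      unfolding q_def using \<epsilon> by (simp add: mult_exp_exp field_simps)
    ultimately have "q * real N \<ge> exp (\<gamma> / (2 * \<epsilon>)) - 1" using q by linarith
    then show ?thesis using L by (simp add: divide_right_mono)
  qed
  finally show ?thesis unfolding N_def .
qed

lemma stay_prob_step:
  assumes ps: "prob_space (P x)" and B: "B \<in> sets borel" and Q: "0 \<le> Q" "Q \<le> 1"
    and fB: "\<And>y. y \<in> B \<Longrightarrow> stay_prob P V n y \<le> 1 - Q"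
    and a: "0 \<le> a" "ennreal a \<le> emeasure (P x) B"
  shows "stay_prob P V (Suc n) x \<le> 1 - Q * a"
proof -
  interpret prob_space "P x" by (rule ps)
  have Bs: "B \<in> sets (P x)" using B sets_P by simp
  have am: "a \<le> measure (P x) B" using a by (simp add: emeasure_eq_measure)
  have ib: "integrable (P x) (indicat_real B)"
    using Bs by (simp add: integrable_indicator_iff less_top[symmetric])
  have "integral\<^sup>L (P x) (stay_prob P V n) \<le> integral\<^sup>L (P x) (\<lambda>y. 1 - Q * indicator B y)"
  proof (rule integral_mono[OF stay_prob_integrable])
    show "integrable (P x) (\<lambda>y. 1 - Q * indicator B y)"
      using ib by (intro Bochner_Integration.integrable_diff) auto
    show "stay_prob P V n y \<le> 1 - Q * indicator B y" for y
      using fB[of y] stay_prob_le_1[of n y] by (auto simp: indicator_def)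
  qed
  also have "\<dots> = 1 - Q * measure (P x) B"
    using Bs ib by (subst Bochner_Integration.integral_diff) (auto simp: prob_space)
  also have "\<dots> \<le> 1 - Q * a" using am Q by (simp add: mult_left_mono)
  finally have I: "integral\<^sup>L (P x) (stay_prob P V n) \<le> 1 - Q * a" .
  have "a \<le> 1" using am prob_le_1 by (rule order_trans)
  then have "Q * a \<le> 1" using Q a(1) by (simp add: mult_le_one)
  then show ?thesis using I by (auto simp: indicator_def)
qed

end

section \<open>Chain costs and the relation <_rho\<close>

lemma sum_lessThan_add_split:
  fixes f :: "nat \<Rightarrow> 'b::comm_monoid_add"
  shows "(\<Sum>i<n + m. f i) = (\<Sum>i<n. f i) + (\<Sum>j<m. f (n + j))"
  by (induction m) (auto simp: add.assoc)

lemma chain_cost_Suc: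
  "chain_cost \<rho> \<xi> (Suc m) = \<rho> (\<xi> 0) (\<xi> 1) + chain_cost \<rho> (\<lambda>i. \<xi> (Suc i)) m"
  unfolding chain_cost_def by (simp only: sum.lessThan_Suc_shift One_nat_def)

lemma chain_cost_append:
  assumes "\<xi> n = \<zeta> 0"
  defines "\<theta> \<equiv> \<lambda>i. if i \<le> n then \<xi> i else \<zeta> (i - n)"
  shows "chain_cost \<rho> \<theta> (n + m) = chain_cost \<rho> \<xi> n + chain_cost \<rho> \<zeta> m"
proof -
  have "chain_cost \<rho> \<theta> (n + m) =
      (\<Sum>i<n. \<rho> (\<theta> i) (\<theta> (Suc i))) + (\<Sum>j<m. \<rho> (\<theta> (n + j)) (\<theta> (Suc (n + j))))"
    unfolding chain_cost_def by (rule sum_lessThan_add_split)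
  also have "(\<Sum>i<n. \<rho> (\<theta> i) (\<theta> (Suc i))) = chain_cost \<rho> \<xi> n"
    unfolding chain_cost_def by (rule sum.cong) (auto simp: \<theta>_def)
  also have "(\<Sum>j<m. \<rho> (\<theta> (n + j)) (\<theta> (Suc (n + j)))) = chain_cost \<rho> \<zeta> m"
    unfolding chain_cost_def by (rule sum.cong) (use assms in \<open>auto simp: \<theta>_def\<close>)
  finally show ?thesis .
qed

lemma B_rho_le_chain:
  assumes "n \<ge> 1" "\<forall>i\<le>n. \<xi> i \<in> M" "\<xi> 0 = x" "\<xi> n = y"
  shows "B_rho M \<rho> x y \<le> chain_cost \<rho> \<xi> n"
  unfolding B_rho_def by (rule INF_lower2[of "(n, \<xi>)"]) (use assms in auto)

lemma B_rho_less_chain: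
  assumes "B_rho M \<rho> x y < c"
  shows "\<exists>n \<xi>. n \<ge> 1 \<and> (\<forall>i\<le>n. \<xi> i \<in> M) \<and> \<xi> 0 = x \<and> \<xi> n = y \<and> chain_cost \<rho> \<xi> n < c"
  using assms unfolding B_rho_def INF_less_iff by auto

lemma B_rho_step: "x \<in> M \<Longrightarrow> y \<in> M \<Longrightarrow> B_rho M \<rho> x y \<le> \<rho> x y"
  using B_rho_le_chain[of 1 "\<lambda>i. if i = 0 then x else y" M x y \<rho>]
  by (auto simp: chain_cost_def)

lemma B_rho_triangle: "B_rho M \<rho> x z \<le> B_rho M \<rho> x y + B_rho M \<rho> y z"
proof (rule ennreal_le_epsilon)
  fix e :: real
  assume fin: "B_rho M \<rho> x y + B_rho M \<rho> y z < \<top>" and e: "0 < e"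
  have "B_rho M \<rho> x y < B_rho M \<rho> x y + ennreal (e/2)"
    using fin e by (simp add: less_top[symmetric] ennreal_add_left_cancel_less)
  from B_rho_less_chain[OF this] obtain n \<xi> where c1: "n \<ge> 1" "\<forall>i\<le>n. \<xi> i \<in> M"
    "\<xi> 0 = x" "\<xi> n = y" "chain_cost \<rho> \<xi> n < B_rho M \<rho> x y + ennreal (e/2)" by blast
  have "B_rho M \<rho> y z < B_rho M \<rho> y z + ennreal (e/2)"
    using fin e by (simp add: less_top[symmetric] ennreal_add_left_cancel_less)
  from B_rho_less_chain[OF this] obtain m \<zeta> where c2: "m \<ge> 1" "\<forall>i\<le>m. \<zeta> i \<in> M"
    "\<zeta> 0 = y" "\<zeta> m = z" "chain_cost \<rho> \<zeta> m < B_rho M \<rho> y z + ennreal (e/2)" by blast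
  define \<theta> where "\<theta> = (\<lambda>i. if i \<le> n then \<xi> i else \<zeta> (i - n))"
  have "B_rho M \<rho> x z \<le> chain_cost \<rho> \<theta> (n + m)"
    by (rule B_rho_le_chain) (use c1 c2 in \<open>auto simp: \<theta>_def\<close>)
  also have "\<dots> = chain_cost \<rho> \<xi> n + chain_cost \<rho> \<zeta> m"
    unfolding \<theta>_def by (rule chain_cost_append) (use c1 c2 in auto)
  also have "\<dots> \<le> (B_rho M \<rho> x y + ennreal (e/2)) + (B_rho M \<rho> y z + ennreal (e/2))"
    using c1(5) c2(5) by (intro add_mono) auto
  also have "\<dots> = B_rho M \<rho> x y + B_rho M \<rho> y z + ennreal e"
    using e by (simp add: add_ac flip: ennreal_plus)
  finally show "B_rho M \<rho> x z \<le> B_rho M \<rho> x y + B_rho M \<rho> y z + ennreal e" .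
qed

lemma B_rho_zeroI:
  assumes "\<And>e::real. 0 < e \<Longrightarrow> B_rho M \<rho> x y \<le> ennreal e"
  shows "B_rho M \<rho> x y = 0"
proof -
  have "B_rho M \<rho> x y \<le> 0"
    by (rule ennreal_le_epsilon) (use assms in auto)
  then show ?thesis by simp
qed

lemma B_rho_orbit:
  assumes "x \<in> M" "F ` M \<subseteq> M" "\<And>u. u \<in> M \<Longrightarrow> \<rho> u (F u) = 0" "k \<ge> 1"
  shows "B_rho M \<rho> x ((F ^^ k) x) = 0"
proof -
  have inM: "(F ^^ i) x \<in> M" for i
    by (induction i) (use assms in auto)
  have "B_rho M \<rho> x ((F ^^ k) x) \<le> chain_cost \<rho> (\<lambda>i. (F ^^ i) x) k"
    by (rule B_rho_le_chain) (use assms inM in auto)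
  also have "\<dots> = 0" unfolding chain_cost_def using assms(3) inM by simp
  finally show ?thesis by simp
qed

lemma rho_le_trans: "rho_le M \<rho> x y \<Longrightarrow> rho_le M \<rho> y z \<Longrightarrow> rho_le M \<rho> x z"
  unfolding rho_le_def using B_rho_triangle[of M \<rho> x z y] by simp

lemma rho_sim_sym: "rho_sim M \<rho> x y \<Longrightarrow> rho_sim M \<rho> y x"
  unfolding rho_sim_def by auto

lemma rho_sim_trans: "rho_sim M \<rho> x y \<Longrightarrow> rho_sim M \<rho> y z \<Longrightarrow> rho_sim M \<rho> x z"
  unfolding rho_sim_def using rho_le_trans by metis

lemma basic_class_member:
  assumes "basic_class M \<rho> K" "w \<in> K"
  shows "w \<in> rho_recurrent M \<rho>" "rho_class M \<rho> w = K"
  using assms unfolding basic_class_def rho_class_def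
  by (auto intro: rho_sim_trans rho_sim_sym)

lemma recurrent_class:
  assumes "w \<in> rho_recurrent M \<rho>"
  shows "basic_class M \<rho> (rho_class M \<rho> w)" "w \<in> rho_class M \<rho> w"
  using assms unfolding basic_class_def rho_class_def rho_recurrent_def by auto

lemma basic_class_sub_recurrent: "basic_class M \<rho> K \<Longrightarrow> K \<subseteq> rho_recurrent M \<rho>"
  unfolding basic_class_def rho_class_def by blast

lemma basic_class_nonempty: "basic_class M \<rho> K \<Longrightarrow> K \<noteq> {}"
  unfolding basic_class_def using recurrent_class(2) by fast

section \<open>The small-noise system and Hypothesis (LD)\<close>

lemma dmax_ge: "\<bar>x$i - y$i\<bar> \<le> dmax x y"
  unfolding dmax_def by (rule Max_ge) auto

lemma dist_le_dmax: "dist x y \<le> real CARD('n) * dmax x (y :: real^'n)"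
proof -
  have "dist x y \<le> (\<Sum>i\<in>UNIV. \<bar>(x - y)$i\<bar>)" unfolding dist_norm by (rule norm_le_l1_cart)
  also have "\<dots> \<le> (\<Sum>i\<in>(UNIV::'n set). dmax x y)" by (rule sum_mono) (use dmax_ge in auto)
  finally show ?thesis by simp
qed

lemma continuous_on_less_near:
  fixes f :: "'a::metric_space \<Rightarrow> 'b::linorder_topology"
  assumes "continuous_on A f" "a \<in> A" "f a < c"
  shows "\<exists>t>0. \<forall>x\<in>A. dist x a < t \<longrightarrow> f x < c"
proof -
  have "eventually (\<lambda>x. f x < c) (at a within A)"
    using assms by (intro order_tendstoD(2)) (auto simp: continuous_on_def)
  then obtain t where "t > 0" "\<forall>x\<in>A. x \<noteq> a \<and> dist x a < t \<longrightarrow> f x < c"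
    by (auto simp: eventually_at)
  then show ?thesis using assms(3) by metis
qed

text \<open>
  The standing assumptions of the paper that the proof actually uses: the state space M
  splits into a closed invariant part M0 and its complement M1, the transition kernels are
  measurable, and the rate function rho satisfies (LD)(i)-(iv).\<close>
locale ld_system =
  fixes M M0 M1 :: "(real^'n) set"
    and F :: "real^'n \<Rightarrow> real^'n"
    and p :: "real \<Rightarrow> real^'n \<Rightarrow> (real^'n) measure"
    and \<rho> :: "real^'n \<Rightarrow> real^'n \<Rightarrow> ennreal"
  assumes M_closed: "closed M"
    and M_split: "M = M0 \<union> M1" "M0 \<inter> M1 = {}"
    and M0_closed: "closed M0"
    and F_maps: "F ` M \<subseteq> M"
    and F_cont: "continuous_on M F"
    and F_bdd: "bounded (F ` M)"
    and p_prob: "\<And>\<epsilon> x. \<epsilon> > 0 \<Longrightarrow> x \<in> M \<Longrightarrow> prob_space (p \<epsilon> x)"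
    and p_meas: "\<And>\<epsilon>. \<epsilon> > 0 \<Longrightarrow> p \<epsilon> \<in> borel \<rightarrow>\<^sub>M subprob_algebra borel"
    and LD_i: "continuous_on (M1 \<times> M) (\<lambda>(x, y). \<rho> x y)"
    and LD_ii: "\<And>x y. x \<in> M \<Longrightarrow> y \<in> M \<Longrightarrow> \<rho> x y = 0 \<longleftrightarrow> y = F x"
    and LD_iii: "\<And>\<beta>. \<beta> > 0 \<Longrightarrow>
        0 < (INF (x, y)\<in>{(x, y). x \<in> M \<and> y \<in> M \<and> dmax (F x) y > \<beta>}. \<rho> x y)"
    and LD_iv: "\<And>K c r \<eta>. compact K \<Longrightarrow> K \<subseteq> M1 \<Longrightarrow> c \<in> M \<Longrightarrow> r > 0 \<Longrightarrow> \<eta> > 0 \<Longrightarrow>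
        \<exists>\<epsilon>0>0. \<forall>x\<in>K. \<forall>\<epsilon>. 0 < \<epsilon> \<and> \<epsilon> < \<epsilon>0 \<longrightarrow>
          ((INF y\<in>ball c r \<inter> M. \<rho> x y) < \<top> \<longrightarrow>
            emeasure (p \<epsilon> x) (ball c r \<inter> M)
              \<ge> ennreal (exp (- (enn2real (INF y\<in>ball c r \<inter> M. \<rho> x y) + \<eta>) / \<epsilon>)))"
begin

lemma p_stay_kernel: "\<epsilon> > 0 \<Longrightarrow> V \<in> sets borel \<Longrightarrow> stay_kernel (p \<epsilon>) V"
  using p_meas by unfold_locales

lemma M1_sub_M: "M1 \<subseteq> M"
  using M_split by auto

text \<open>M1 is open relative to M, since its complement M0 is closed.\<close>
lemma M1_relatively_open:
  assumes "x \<in> M1" shows "\<exists>r>0. ball x r \<inter> M \<subseteq> M1"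
proof -
  have "x \<in> - M0" using assms M_split by auto
  then obtain r where "r > 0" "ball x r \<subseteq> - M0"
    using open_contains_ball[of "- M0"] M0_closed by (auto simp: open_Compl)
  then show ?thesis using M_split by (intro exI[of _ r]) auto
qed

lemma rho_F_zero: "u \<in> M \<Longrightarrow> \<rho> u (F u) = 0"
  using LD_ii F_maps by auto

text \<open>Following F costs nothing (LD)(ii), so orbit points are reachable at zero cost.\<close>
lemma orbit_in_M: "z \<in> M \<Longrightarrow> (F ^^ k) z \<in> M"
  by (induction k) (use F_maps in auto)

lemma orbit_zero_cost: "z \<in> M \<Longrightarrow> k \<ge> 1 \<Longrightarrow> B_rho M \<rho> z ((F ^^ k) z) = 0"
  using B_rho_orbit[of z M F \<rho> k] F_maps rho_F_zero by blast

text \<open>By (LD)(iii), every recurrent point is the endpoint of a cheap jump, hence lies within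
  dmax-distance 1 of F(M).\<close>
lemma recurrent_near_image:
  assumes w: "w \<in> rho_recurrent M \<rho>"
  shows "\<exists>u\<in>M. dmax (F u) w \<le> 1"
proof -
  define c where "c = (INF (x, y)\<in>{(x, y). x \<in> M \<and> y \<in> M \<and> dmax (F x) y > 1}. \<rho> x y)"
  have c: "c > 0" unfolding c_def by (rule LD_iii) simp
  have wM: "w \<in> M" and B0: "B_rho M \<rho> w w = 0"
    using w unfolding rho_recurrent_def rho_sim_def rho_le_def by auto
  from B_rho_less_chain[of M \<rho> w w c] B0 c obtain n \<xi> where
    ch: "n \<ge> 1" "\<forall>i\<le>n. \<xi> i \<in> M" "\<xi> n = w" "chain_cost \<rho> \<xi> n < c"
    by auto
  obtain k where k: "n = Suc k" using ch(1) by (cases n) auto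
  have "\<rho> (\<xi> k) (\<xi> (Suc k)) \<le> chain_cost \<rho> \<xi> n"
    unfolding chain_cost_def k by (rule member_le_sum) auto
  then have lt: "\<rho> (\<xi> k) w < c" using ch k by auto
  have uM: "\<xi> k \<in> M" using ch(2) k by auto
  show ?thesis
  proof (rule bexI[OF _ uM], rule ccontr)
    assume "\<not> dmax (F (\<xi> k)) w \<le> 1"
    then have "c \<le> \<rho> (\<xi> k) w" unfolding c_def
      using uM wM by (intro INF_lower2[of "(\<xi> k, w)"]) auto
    then show False using lt by simp
  qed
qed

text \<open>Since F(M) is bounded, so is the set of recurrent points.\<close>
lemma recurrent_bounded: "bounded (rho_recurrent M \<rho>)"
proof -
  obtain b where b: "\<forall>x\<in>F ` M. norm x \<le> b" using F_bdd bounded_iff by blast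
  show ?thesis unfolding bounded_iff
  proof (intro exI[of _ "b + real CARD('n)"] ballI)
    fix w assume w: "w \<in> rho_recurrent M \<rho>"
    obtain u where u: "u \<in> M" "dmax (F u) w \<le> 1" using recurrent_near_image[OF w] by blast
    have "dist (F u) w \<le> real CARD('n)"
      using dist_le_dmax[of "F u" w] mult_left_mono[OF u(2), of "real CARD('n)"] by linarith
    moreover have "norm (F u) \<le> b" using b u by auto
    ultimately show "norm w \<le> b + real CARD('n)"
      using norm_triangle_ineq[of "F u" "w - F u"] by (simp add: dist_norm norm_minus_commute)
  qed
qed

text \<open>The graph of F over S is compact and lies in the open set
  where rho is below e, hence so does a uniform neighbourhood of it.\<close>
lemma uniform_near_image:
  assumes S: "compact S" "S \<subseteq> M1" and e: "e > 0"
  shows "\<exists>r>0. \<forall>u\<in>S. \<forall>v\<in>M. dist v (F u) < r \<longrightarrow> \<rho> u v < e"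
proof -
  obtain W where W: "open W" "W \<inter> (M1 \<times> M) = (\<lambda>(x, y). \<rho> x y) -` {..<e} \<inter> (M1 \<times> M)"
    using LD_i[unfolded continuous_on_open_invariant] open_lessThan by blast
  define G where "G = (\<lambda>u. (u, F u)) ` S"
  have "continuous_on S (\<lambda>u. (u, F u))"
    using S M1_sub_M by (intro continuous_intros continuous_on_subset[OF F_cont]) auto
  then have G: "compact G" unfolding G_def using S(1) by (rule compact_continuous_image)
  have "G \<subseteq> W"
  proof
    fix g assume "g \<in> G"
    then obtain u where u: "u \<in> S" "g = (u, F u)" unfolding G_def by blast
    then have "u \<in> M" using S M1_sub_M by auto
    then have "g \<in> (\<lambda>(x, y). \<rho> x y) -` {..<e} \<inter> (M1 \<times> M)"
      using u S rho_F_zero F_maps e by auto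
    then show "g \<in> W" using W(2) by blast
  qed
  then obtain d where d: "d > 0" "\<forall>g\<in>G. \<forall>y\<in>- W. d \<le> dist g y"
    using separate_compact_closed[OF G, of "- W"] W(1) by blast
  show ?thesis
  proof (intro exI[of _ d] conjI ballI impI d(1))
    fix u v assume uv: "u \<in> S" "v \<in> M" "dist v (F u) < d"
    have "dist (u, F u) (u, v) < d" using uv(3) by (simp add: dist_Pair_Pair dist_commute)
    then have "(u, v) \<in> W" using d(2) uv(1) unfolding G_def by force
    then show "\<rho> u v < e" using W(2) uv S by auto
  qed
qed

section \<open>Limit points of orbits are chain recurrent\<close>

lemma limit_point_cheap_jumps:
  assumes S: "compact S" "S \<subseteq> M1" and orbit: "\<And>k. (F ^^ k) z \<in> S" and w: "w \<in> S"
    and \<sigma>: "strict_mono \<sigma>" "(\<lambda>l. (F ^^ \<sigma> l) z) \<longlonglongrightarrow> w" and e: "e > 0"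
  shows "\<exists>j\<ge>N. \<rho> ((F ^^ j) z) w < e" "\<exists>k. \<rho> w ((F ^^ Suc k) z) < e"
proof -
  have wM: "w \<in> M" using w S M1_sub_M by blast
  obtain r where r: "r > 0" "\<And>u v. u \<in> S \<Longrightarrow> v \<in> M \<Longrightarrow> dist v (F u) < r \<Longrightarrow> \<rho> u v < e"
    using uniform_near_image[OF S e] by blast
  have near: "\<exists>L. \<forall>l\<ge>L. dist ((F ^^ \<sigma> l) z) w < t" if "t > 0" for t
    using \<sigma>(2) that unfolding lim_sequentially by blast
  obtain L where L: "\<forall>l\<ge>L. dist ((F ^^ \<sigma> l) z) w < r" using near[OF r(1)] by blast
  define j where "j = \<sigma> (max L (Suc N)) - 1"
  have "Suc N \<le> \<sigma> (max L (Suc N))"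
    using seq_suble[OF \<sigma>(1), of "max L (Suc N)"] by linarith
  then have j: "Suc j = \<sigma> (max L (Suc N))" "j \<ge> N" unfolding j_def by auto
  have "dist ((F ^^ Suc j) z) w < r" unfolding j(1) using L by simp
  then have "dist w (F ((F ^^ j) z)) < r" by (simp add: dist_commute)
  then show "\<exists>j\<ge>N. \<rho> ((F ^^ j) z) w < e" using r(2) orbit wM j(2) by blast
  obtain s where s: "s > 0" "\<forall>x\<in>M. dist x w < s \<longrightarrow> dist (F x) (F w) < r"
    using F_cont[unfolded continuous_on_iff] wM r(1) by blast
  obtain L' where "dist ((F ^^ \<sigma> L') z) w < s" using near[OF s(1)] by blast
  then have "dist ((F ^^ Suc (\<sigma> L')) z) (F w) < r"
    using s(2) orbit S M1_sub_M by auto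
  then show "\<exists>k. \<rho> w ((F ^^ Suc k) z) < e"
    using r(2)[OF w] orbit S M1_sub_M by blast
qed

text \<open>The limit point w is recurrent: jump from w close to the orbit, follow the orbit for
  free, and jump back to w from a later orbit point, all at arbitrarily small cost.\<close>
lemma limit_point_recurrent:
  assumes S: "compact S" "S \<subseteq> M1" and orbit: "\<And>k. (F ^^ k) z \<in> S" and w: "w \<in> S"
    and \<sigma>: "strict_mono \<sigma>" "(\<lambda>l. (F ^^ \<sigma> l) z) \<longlonglongrightarrow> w"
  shows "w \<in> rho_recurrent M \<rho>"
proof -
  note jumps = limit_point_cheap_jumps[OF S orbit w \<sigma>]
  have inM: "(F ^^ k) z \<in> M" for k using orbit S M1_sub_M by blast
  have wM: "w \<in> M" using w S M1_sub_M by blast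
  have "B_rho M \<rho> w w = 0"
  proof (rule B_rho_zeroI)
    fix e :: real assume e: "0 < e"
    obtain k where k: "\<rho> w ((F ^^ Suc k) z) < ennreal (e/2)" using jumps(2)[of "ennreal (e/2)"] e by auto
    obtain j where j: "j \<ge> Suc (Suc k) + 1" "\<rho> ((F ^^ j) z) w < ennreal (e/2)"
      using jumps(1)[of "ennreal (e/2)"] e by auto
    define a where "a = (F ^^ Suc k) z"
    have aM: "a \<in> M" unfolding a_def by (rule inM)
    have "(F ^^ j) z = (F ^^ ((j - Suc k) + Suc k)) z" using j(1) by simp
    also have "\<dots> = (F ^^ (j - Suc k)) a" unfolding a_def by (simp only: funpow_add o_apply)
    finally have ja: "(F ^^ j) z = (F ^^ (j - Suc k)) a" .
    have Baj: "B_rho M \<rho> a ((F ^^ j) z) = 0"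
      unfolding ja by (rule orbit_zero_cost) (use j(1) aM in auto)
    have "B_rho M \<rho> w w \<le> B_rho M \<rho> w a + (B_rho M \<rho> a ((F ^^ j) z) + B_rho M \<rho> ((F ^^ j) z) w)"
      using B_rho_triangle[of M \<rho> w w a] add_left_mono[OF B_rho_triangle[of M \<rho> a w "(F ^^ j) z"]]
      by (rule order_trans)
    also have "\<dots> \<le> \<rho> w a + (0 + \<rho> ((F ^^ j) z) w)"
      unfolding Baj using B_rho_step[OF wM aM] B_rho_step[OF inM wM] by (intro add_mono) auto
    also have "\<dots> \<le> ennreal (e/2) + ennreal (e/2)"
      using k j(2) unfolding a_def by (intro add_mono) auto
    also have "\<dots> = ennreal e" using e by (simp flip: ennreal_plus)
    finally show "B_rho M \<rho> w w \<le> ennreal e" .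
  qed
  then show "w \<in> rho_recurrent M \<rho>"
    using wM unfolding rho_recurrent_def rho_sim_def rho_le_def by simp
qed

lemma orbit_reaches_limit_point:
  assumes S: "compact S" "S \<subseteq> M1" and orbit: "\<And>k. (F ^^ k) z \<in> S" and w: "w \<in> S"
    and \<sigma>: "strict_mono \<sigma>" "(\<lambda>l. (F ^^ \<sigma> l) z) \<longlonglongrightarrow> w"
  shows "rho_le M \<rho> z w"
proof -
  note jumps = limit_point_cheap_jumps[OF S orbit w \<sigma>]
  have inM: "(F ^^ k) z \<in> M" for k using orbit S M1_sub_M by blast
  have wM: "w \<in> M" using w S M1_sub_M by blast
  have "B_rho M \<rho> z w = 0"
  proof (rule B_rho_zeroI)
    fix e :: real assume e: "0 < e"
    obtain j where j: "j \<ge> 1" "\<rho> ((F ^^ j) z) w < ennreal e" using jumps(1)[of "ennreal e" 1] e by auto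
    have "B_rho M \<rho> z w \<le> B_rho M \<rho> z ((F ^^ j) z) + B_rho M \<rho> ((F ^^ j) z) w"
      by (rule B_rho_triangle)
    also have "\<dots> \<le> 0 + \<rho> ((F ^^ j) z) w"
      using orbit_zero_cost[OF inM[of 0] j(1)] B_rho_step[OF inM wM] by simp
    finally show "B_rho M \<rho> z w \<le> ennreal e" using j(2) by simp
  qed
  then show "rho_le M \<rho> z w" unfolding rho_le_def .
qed

section \<open>Escaping along a cheap chain\<close>

text \<open>Continuity (LD)(i) transfers the cost from x0 to x.\<close>
lemma lower_bound_near:
  assumes x0: "x0 \<in> M1" and y1: "y1 \<in> M" and fin: "\<rho> x0 y1 < \<top>" and r1: "r1 > 0"
    and \<eta>: "\<eta> > 0"
  shows "\<exists>r>0. \<exists>\<epsilon>0>0. \<forall>\<epsilon> x. 0 < \<epsilon> \<and> \<epsilon> < \<epsilon>0 \<and> x \<in> ball x0 r \<inter> M \<longrightarrow>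
     ennreal (exp (- (enn2real (\<rho> x0 y1) + \<eta>) / \<epsilon>)) \<le> emeasure (p \<epsilon> x) (ball y1 r1 \<inter> M)"
proof -
  define A where "A = enn2real (\<rho> x0 y1)"
  have A: "A \<ge> 0" "\<rho> x0 y1 = ennreal A" unfolding A_def using fin by (auto simp: less_top)
  have cont: "continuous_on M1 (\<lambda>x. \<rho> x y1)"
    by (rule continuous_on_compose2[OF LD_i, of M1 "\<lambda>x. (x, y1)", simplified])
      (use y1 in \<open>auto intro: continuous_intros\<close>)
  have "\<rho> x0 y1 < ennreal (A + \<eta>/2)" using A \<eta> by (simp add: ennreal_lessI)
  from continuous_on_less_near[OF cont x0 this] obtain t
    where t: "t > 0" "\<forall>x\<in>M1. dist x x0 < t \<longrightarrow> \<rho> x y1 < ennreal (A + \<eta>/2)"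
    by blast
  obtain r2 where r2: "r2 > 0" "ball x0 r2 \<inter> M \<subseteq> M1" using M1_relatively_open[OF x0] by blast
  define r where "r = min t r2 / 2"
  have r: "r > 0" "r < t" "r < r2" using t r2 unfolding r_def by auto
  define K where "K = cball x0 r \<inter> M"
  have K: "compact K" "K \<subseteq> M1"
    unfolding K_def using M_closed r2(2) r(3) by (auto intro!: compact_Int_closed)
  obtain \<epsilon>0 where \<epsilon>0: "\<epsilon>0 > 0" "\<And>x \<epsilon>. x \<in> K \<Longrightarrow> 0 < \<epsilon> \<Longrightarrow> \<epsilon> < \<epsilon>0 \<Longrightarrow>
      (INF y\<in>ball y1 r1 \<inter> M. \<rho> x y) < \<top> \<Longrightarrow>
      ennreal (exp (- (enn2real (INF y\<in>ball y1 r1 \<inter> M. \<rho> x y) + \<eta>/2) / \<epsilon>))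
        \<le> emeasure (p \<epsilon> x) (ball y1 r1 \<inter> M)"
    using LD_iv[OF K y1 r1, of "\<eta>/2"] \<eta> by auto
  have "ennreal (exp (- (A + \<eta>) / \<epsilon>)) \<le> emeasure (p \<epsilon> x) (ball y1 r1 \<inter> M)"
    if \<epsilon>: "0 < \<epsilon>" "\<epsilon> < \<epsilon>0" and x: "x \<in> ball x0 r \<inter> M" for \<epsilon> x
  proof -
    have xK: "x \<in> K" using x unfolding K_def by auto
    define I where "I = (INF y\<in>ball y1 r1 \<inter> M. \<rho> x y)"
    have "I \<le> \<rho> x y1" unfolding I_def using r1 y1 by (intro INF_lower) auto
    also have "\<dots> < ennreal (A + \<eta>/2)"
      using t(2) K(2) xK x r by (auto simp: dist_commute)
    finally have IA: "I < ennreal (A + \<eta>/2)" .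
    have "enn2real I \<le> enn2real (ennreal (A + \<eta>/2))"
      using IA by (intro enn2real_mono) auto
    then have "enn2real I \<le> A + \<eta>/2" using A \<eta> by (subst (asm) enn2real_ennreal) auto
    then have "exp (- (A + \<eta>) / \<epsilon>) \<le> exp (- (enn2real I + \<eta>/2) / \<epsilon>)"
      using \<epsilon> by (simp add: divide_simps)
    also have "ennreal \<dots> \<le> emeasure (p \<epsilon> x) (ball y1 r1 \<inter> M)"
      using \<epsilon>0(2)[OF xK \<epsilon>] IA ennreal_less_top[of "A + \<eta>/2"] unfolding I_def
      by (meson order.strict_trans)
    finally show ?thesis by (simp add: ennreal_leI)
  qed
  then show ?thesis using r(1) \<epsilon>0(1) unfolding A_def by blast
qed

lemma escape_step:
  assumes V: "V \<in> sets borel" and x0: "x0 \<in> M1" and y1: "y1 \<in> M" and fin: "\<rho> x0 y1 < \<top>"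
    and \<eta>: "\<eta> > 0" and b: "b \<ge> 0" and r1: "r1 > 0" and \<epsilon>1: "\<epsilon>1 > 0"
    and next_bound: "\<forall>\<epsilon> y. 0 < \<epsilon> \<and> \<epsilon> < \<epsilon>1 \<and> y \<in> ball y1 r1 \<inter> M \<longrightarrow>
         stay_prob (p \<epsilon>) V m y \<le> 1 - exp (- b / \<epsilon>)"
  shows "\<exists>r>0. \<exists>\<epsilon>0>0. \<forall>\<epsilon> x. 0 < \<epsilon> \<and> \<epsilon> < \<epsilon>0 \<and> x \<in> ball x0 r \<inter> M \<longrightarrow>
         stay_prob (p \<epsilon>) V (Suc m) x \<le> 1 - exp (- (enn2real (\<rho> x0 y1) + \<eta> + b) / \<epsilon>)"
proof -
  define A where "A = enn2real (\<rho> x0 y1)"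
  obtain r \<epsilon>2 where r: "r > 0" "\<epsilon>2 > 0" and lower: "\<forall>\<epsilon> x. 0 < \<epsilon> \<and> \<epsilon> < \<epsilon>2 \<and> x \<in> ball x0 r \<inter> M \<longrightarrow>
     ennreal (exp (- (A + \<eta>) / \<epsilon>)) \<le> emeasure (p \<epsilon> x) (ball y1 r1 \<inter> M)"
    using lower_bound_near[OF x0 y1 fin r1 \<eta>] unfolding A_def by blast
  have "stay_prob (p \<epsilon>) V (Suc m) x \<le> 1 - exp (- (A + \<eta> + b) / \<epsilon>)"
    if \<epsilon>: "0 < \<epsilon>" "\<epsilon> < min \<epsilon>1 \<epsilon>2" and x: "x \<in> ball x0 r \<inter> M" for \<epsilon> x
  proof -
    interpret stay_kernel "p \<epsilon>" V using p_stay_kernel \<epsilon> V by blast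
    have "stay_prob (p \<epsilon>) V (Suc m) x \<le> 1 - exp (- b / \<epsilon>) * exp (- (A + \<eta>) / \<epsilon>)"
    proof (rule stay_prob_step)
      show "prob_space (p \<epsilon> x)" using p_prob \<epsilon> x by auto
      show "ball y1 r1 \<inter> M \<in> sets borel" using M_closed by auto
      show "0 \<le> exp (- b / \<epsilon>)" "exp (- b / \<epsilon>) \<le> 1" using b \<epsilon> by (auto simp: divide_simps)
      show "stay_prob (p \<epsilon>) V m y \<le> 1 - exp (- b / \<epsilon>)" if "y \<in> ball y1 r1 \<inter> M" for y
        using next_bound \<epsilon> that by auto
      show "0 \<le> exp (- (A + \<eta>) / \<epsilon>)" by simp
      show "ennreal (exp (- (A + \<eta>) / \<epsilon>)) \<le> emeasure (p \<epsilon> x) (ball y1 r1 \<inter> M)"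
        using lower \<epsilon> x by auto
    qed
    also have "exp (- b / \<epsilon>) * exp (- (A + \<eta>) / \<epsilon>) = exp (- (A + \<eta> + b) / \<epsilon>)"
      by (simp add: mult_exp_exp add_divide_distrib diff_divide_distrib algebra_simps)
    finally show ?thesis .
  qed
  then show ?thesis using r \<epsilon>1 unfolding A_def by (intro exI[of _ r] conjI exI[of _ "min \<epsilon>1 \<epsilon>2"]) auto
qed

lemma chain_escape:
  assumes V: "V \<in> sets borel" "V \<subseteq> S" and S: "closed S" and \<eta>: "\<eta> > 0"
  shows "(\<forall>i\<le>m. \<xi> i \<in> M) \<Longrightarrow> (\<forall>i<m. \<xi> i \<in> M1) \<Longrightarrow> \<xi> m \<notin> S \<Longrightarrow>
    chain_cost \<rho> \<xi> m < \<top> \<Longrightarrow>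
    \<exists>r>0. \<exists>\<epsilon>0>0. \<forall>\<epsilon> x. 0 < \<epsilon> \<and> \<epsilon> < \<epsilon>0 \<and> x \<in> ball (\<xi> 0) r \<inter> M \<longrightarrow>
      stay_prob (p \<epsilon>) V m x \<le> 1 - exp (- (enn2real (chain_cost \<rho> \<xi> m) + real m * \<eta>) / \<epsilon>)"
proof (induction m arbitrary: \<xi>)
  case 0
  obtain r where "r > 0" "ball (\<xi> 0) r \<subseteq> - S"
    using open_contains_ball[of "- S"] S 0 by (auto simp: open_Compl)
  then show ?case
    using V(2) by (intro exI[of _ r] conjI exI[of _ 1]) (auto simp: chain_cost_def indicator_def)
next
  case (Suc m)
  define \<xi>' where "\<xi>' = (\<lambda>i. \<xi> (Suc i))"
  have cost: "chain_cost \<rho> \<xi> (Suc m) = \<rho> (\<xi> 0) (\<xi> 1) + chain_cost \<rho> \<xi>' m"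
    unfolding \<xi>'_def by (rule chain_cost_Suc)
  have fin: "\<rho> (\<xi> 0) (\<xi> 1) < \<top>" "chain_cost \<rho> \<xi>' m < \<top>" using Suc.prems(4) cost by auto
  obtain r1 \<epsilon>1 where "r1 > 0" "\<epsilon>1 > 0" "\<forall>\<epsilon> y. 0 < \<epsilon> \<and> \<epsilon> < \<epsilon>1 \<and> y \<in> ball (\<xi> 1) r1 \<inter> M \<longrightarrow>
      stay_prob (p \<epsilon>) V m y \<le> 1 - exp (- (enn2real (chain_cost \<rho> \<xi>' m) + real m * \<eta>) / \<epsilon>)"
    using Suc.IH[of \<xi>'] Suc.prems fin(2) unfolding \<xi>'_def by auto
  from escape_step[OF V(1) _ _ fin(1) \<eta> _ this] Suc.prems(1,2) \<eta>
  have "\<exists>r>0. \<exists>\<epsilon>0>0. \<forall>\<epsilon> x. 0 < \<epsilon> \<and> \<epsilon> < \<epsilon>0 \<and> x \<in> ball (\<xi> 0) r \<inter> M \<longrightarrow>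
      stay_prob (p \<epsilon>) V (Suc m) x \<le> 1 - exp (- (enn2real (\<rho> (\<xi> 0) (\<xi> 1)) + \<eta> +
        (enn2real (chain_cost \<rho> \<xi>' m) + real m * \<eta>)) / \<epsilon>)"
    by auto
  moreover have "enn2real (\<rho> (\<xi> 0) (\<xi> 1)) + \<eta> + (enn2real (chain_cost \<rho> \<xi>' m) + real m * \<eta>) =
      enn2real (chain_cost \<rho> \<xi> (Suc m)) + real (Suc m) * \<eta>"
    unfolding cost enn2real_plus[OF fin] by (simp add: algebra_simps)
  ultimately show ?case by (simp only:)
qed

end

section \<open>An isolating neighbourhood of a non-maximal basic class\<close>

locale nonattracting_class = ld_system M M0 M1 F p \<rho>
  for M M0 M1 :: "(real^'n) set" and F p \<rho> +
  fixes Kj :: "(real^'n) set"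
  assumes classes_fin: "finite {K. basic_class M \<rho> K \<and> K \<subseteq> M1}"
    and classes_closed: "\<And>K. basic_class M \<rho> K \<Longrightarrow> K \<subseteq> M1 \<Longrightarrow> closed K"
    and Kj_class: "basic_class M \<rho> Kj" "Kj \<subseteq> M1"
    and Kj_not_qa: "\<not> quasiattractor M \<rho> Kj"
begin

text \<open>Kj is closed by hypothesis and bounded because all recurrent points are.\<close>
lemma Kj_compact: "compact Kj"
  using classes_closed[OF Kj_class] recurrent_bounded basic_class_sub_recurrent[OF Kj_class(1)]
  by (simp add: compact_eq_bounded_closed bounded_subset)

lemma Kj_in_M: "Kj \<subseteq> M"
  using basic_class_sub_recurrent[OF Kj_class(1)] unfolding rho_recurrent_def by blast

text \<open>Kj has positive distance from M0 and from the finitely many other closed classes in M1,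
  so a small closed neighbourhood of Kj lies in M1 and meets no other class in M1.\<close>
lemma isolating_radius:
  "\<exists>\<eta>>0. \<forall>x\<in>M. infdist x Kj \<le> \<eta> \<longrightarrow>
     x \<in> M1 \<and> (\<forall>K. basic_class M \<rho> K \<and> K \<subseteq> M1 \<and> K \<noteq> Kj \<longrightarrow> x \<notin> K)"
proof -
  define T where "T = M0 \<union> \<Union>{K. basic_class M \<rho> K \<and> K \<subseteq> M1 \<and> K \<noteq> Kj}"
  have "closed (\<Union>{K. basic_class M \<rho> K \<and> K \<subseteq> M1 \<and> K \<noteq> Kj})"
    using classes_closed by (intro closed_Union finite_subset[OF _ classes_fin]) auto
  then have T: "closed T" unfolding T_def using M0_closed by auto
  have "w \<notin> K" if "w \<in> Kj" "basic_class M \<rho> K" "K \<noteq> Kj" for w K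
  proof
    assume "w \<in> K"
    then have "rho_class M \<rho> w = K" by (rule basic_class_member(2)[OF that(2)])
    then show False using basic_class_member(2)[OF Kj_class(1) that(1)] that(3) by simp
  qed
  moreover have "Kj \<inter> M0 = {}" using Kj_class(2) M_split by auto
  ultimately have disj: "Kj \<inter> T = {}" unfolding T_def by blast
  obtain d where d: "d > 0" "\<forall>x\<in>Kj. \<forall>y\<in>T. d \<le> dist x y"
    using separate_compact_closed[OF Kj_compact T disj] by blast
  have notT: "x \<notin> T" if x: "infdist x Kj \<le> d/2" for x
  proof
    assume "x \<in> T"
    obtain y where y: "y \<in> Kj" "infdist x Kj = dist x y"
      using infdist_attains_inf[OF classes_closed[OF Kj_class] basic_class_nonempty[OF Kj_class(1)]]
      by blast
    have "d \<le> dist y x" using d(2) y(1) \<open>x \<in> T\<close> by blast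
    then have "d \<le> infdist x Kj" using y(2) by (simp add: dist_commute)
    then show False using d(1) x by linarith
  qed
  show ?thesis
  proof (intro exI[of _ "d/2"] conjI ballI impI allI)
    show "d/2 > 0" using d(1) by simp
    fix x assume "x \<in> M" "infdist x Kj \<le> d/2"
    then have "x \<in> M" "x \<notin> T" using notT by auto
    then show "x \<in> M1" using M_split unfolding T_def by blast
    fix K assume "basic_class M \<rho> K \<and> K \<subseteq> M1 \<and> K \<noteq> Kj"
    then show "x \<notin> K" using \<open>x \<notin> T\<close> unfolding T_def by blast
  qed
qed

end

locale isolating_nbhd = nonattracting_class +
  fixes \<eta> :: real
  assumes eta_pos: "\<eta> > 0"
    and eta_sep: "\<And>x. x \<in> M \<Longrightarrow> infdist x Kj \<le> \<eta> \<Longrightarrow>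
       x \<in> M1 \<and> (\<forall>K. basic_class M \<rho> K \<and> K \<subseteq> M1 \<and> K \<noteq> Kj \<longrightarrow> x \<notin> K)"
begin

definition S where "S = {x\<in>M. infdist x Kj \<le> \<eta>}"

abbreviation V where "V \<equiv> nbhd M \<eta> Kj"

lemma V_char: "V = {x\<in>M. \<exists>y\<in>Kj. dist x y < \<eta>}"
  unfolding nbhd_def by (auto simp: INF_less_iff)

lemma V_borel: "V \<in> sets borel"
proof -
  have "V = M \<inter> (\<Union>y\<in>Kj. ball y \<eta>)" unfolding V_char by (auto simp: dist_commute)
  moreover have "M \<inter> (\<Union>y\<in>Kj. ball y \<eta>) \<in> sets borel"
    using M_closed by (intro sets.Int borel_closed borel_open open_UN) auto
  ultimately show ?thesis by simp
qed

lemma S_in_M1: "S \<subseteq> M1"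
  using eta_sep unfolding S_def by auto

lemma S_closed: "closed S"
proof -
  have "S = M \<inter> {x. infdist x Kj \<le> \<eta>}" by (auto simp: S_def)
  moreover have "closed {x. infdist x Kj \<le> \<eta>}" by (intro closed_Collect_le continuous_intros)
  ultimately show ?thesis using M_closed by (simp add: closed_Int)
qed

lemma S_compact: "compact S"
proof -
  obtain b where b: "\<forall>x\<in>Kj. norm x \<le> b"
    using Kj_compact compact_imp_bounded bounded_iff by blast
  have "norm x \<le> b + \<eta>" if x: "x \<in> S" for x
  proof -
    obtain y where y: "y \<in> Kj" "infdist x Kj = dist x y"
      using infdist_attains_inf[OF classes_closed[OF Kj_class] basic_class_nonempty[OF Kj_class(1)]]
      by blast
    have "norm x \<le> norm y + dist x y"
      using norm_triangle_ineq[of y "x - y"] by (simp add: dist_norm)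
    moreover have "norm y \<le> b" using b y(1) by blast
    moreover have "dist x y \<le> \<eta>" using x y(2) unfolding S_def by simp
    ultimately show ?thesis by linarith
  qed
  then have "bounded S" unfolding bounded_iff by blast
  then show ?thesis using S_closed by (simp add: compact_eq_bounded_closed)
qed

lemma V_sub_S: "V \<subseteq> S"
proof
  fix x assume "x \<in> V"
  then obtain y where "x \<in> M" "y \<in> Kj" "dist x y < \<eta>" unfolding V_char by blast
  then show "x \<in> S" unfolding S_def using infdist_le[of y Kj x] by auto
qed

text \<open>Inside S the
  only class in M1 is Kj; a different class must therefore leave S, while Kj, not being
  maximal, lies below another class, which in turn leaves S.\<close>
lemma exit_from_other_class:
  assumes w: "w \<in> S" "w \<in> rho_recurrent M \<rho>" and ne: "rho_class M \<rho> w \<noteq> Kj"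
  shows "\<exists>u\<in>M. u \<notin> S \<and> rho_le M \<rho> w u"
proof -
  note cls = recurrent_class[OF w(2)]
  have "\<not> rho_class M \<rho> w \<subseteq> M1"
  proof
    assume "rho_class M \<rho> w \<subseteq> M1"
    then have "w \<notin> rho_class M \<rho> w" using eta_sep[of w] w(1) ne cls(1) unfolding S_def by blast
    then show False using cls(2) by contradiction
  qed
  then obtain u where u: "u \<in> rho_class M \<rho> w" "u \<notin> M1" by blast
  then have "u \<in> M" "rho_le M \<rho> w u" "u \<notin> S"
    using S_in_M1 unfolding rho_class_def rho_recurrent_def rho_sim_def by auto
  then show ?thesis by blast
qed

lemma exit_from_recurrent:
  assumes w: "w \<in> S" "w \<in> rho_recurrent M \<rho>"
  shows "\<exists>u\<in>M. u \<notin> S \<and> rho_le M \<rho> w u"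
proof (cases "rho_class M \<rho> w = Kj")
  case False
  then show ?thesis using exit_from_other_class[OF w] by blast
next
  case True
  obtain K' where K': "basic_class M \<rho> K'" "class_le M \<rho> Kj K'" "K' \<noteq> Kj"
    using Kj_not_qa Kj_class(1) unfolding quasiattractor_def by blast
  then obtain a b where ab: "a \<in> Kj" "b \<in> K'" "rho_le M \<rho> a b" unfolding class_le_def by blast
  have "a \<in> rho_class M \<rho> w" using ab(1) True by simp
  then have "rho_le M \<rho> w a" unfolding rho_class_def rho_sim_def by blast
  then have wb: "rho_le M \<rho> w b" using ab(3) by (rule rho_le_trans)
  note b = basic_class_member[OF K'(1) ab(2)]
  show ?thesis
  proof (cases "b \<in> S")
    case False
    then show ?thesis using wb b(1) unfolding rho_recurrent_def by blast
  next
    case bS: True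
    have "rho_class M \<rho> b \<noteq> Kj" using b(2) K'(3) by simp
    then obtain u where "u \<in> M" "u \<notin> S" "rho_le M \<rho> b u"
      using exit_from_other_class[OF bS b(1)] by blast
    then show ?thesis using rho_le_trans[OF wb] by blast
  qed
qed

text \<open>Every point of S reaches the outside of S at zero cost: either its orbit leaves S, or
  the orbit accumulates at a recurrent point of S, from which exit_from_recurrent applies.\<close>
lemma zero_cost_exit:
  assumes z: "z \<in> S" shows "\<exists>u\<in>M. u \<notin> S \<and> rho_le M \<rho> z u"
proof (cases "\<exists>k. (F ^^ k) z \<notin> S")
  case True
  then obtain k where k: "(F ^^ k) z \<notin> S" by blast
  have zM: "z \<in> M" using z S_in_M1 M1_sub_M by blast
  have "k \<ge> 1" using k z by (cases k) auto
  then have "B_rho M \<rho> z ((F ^^ k) z) = 0" by (rule orbit_zero_cost[OF zM])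
  then show ?thesis using k orbit_in_M[OF zM, of k] unfolding rho_le_def by blast
next
  case False
  then have orbit: "\<And>k. (F ^^ k) z \<in> S" by blast
  then have "\<forall>k. (F ^^ k) z \<in> S" by blast
  then obtain w \<sigma> where w: "w \<in> S" "strict_mono \<sigma>" "((\<lambda>k. (F ^^ k) z) \<circ> \<sigma>) \<longlonglongrightarrow> w"
    by (rule seq_compactE[OF compact_imp_seq_compact[OF S_compact]])
  have "(\<lambda>l. (F ^^ \<sigma> l) z) \<longlonglongrightarrow> w" using w(3) by (simp add: o_def)
  note w_rec = limit_point_recurrent[OF S_compact S_in_M1 orbit w(1,2) this]
    orbit_reaches_limit_point[OF S_compact S_in_M1 orbit w(1,2) this]
  obtain u where "u \<in> M" "u \<notin> S" "rho_le M \<rho> w u" using exit_from_recurrent[OF w(1) w_rec(1)] by blast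
  then show ?thesis using rho_le_trans[OF w_rec(2)] by blast
qed

lemma cheap_exit_chain:
  assumes z: "z \<in> S" and \<delta>: "\<delta> > 0"
  shows "\<exists>m \<xi>. \<xi> 0 = z \<and> (\<forall>i\<le>m. \<xi> i \<in> M) \<and> (\<forall>i<m. \<xi> i \<in> M1) \<and> \<xi> m \<notin> S \<and>
    chain_cost \<rho> \<xi> m < ennreal \<delta>"
proof -
  obtain u where u: "u \<notin> S" "rho_le M \<rho> z u" using zero_cost_exit[OF z] by blast
  have "B_rho M \<rho> z u < ennreal \<delta>" using u(2) \<delta> unfolding rho_le_def by simp
  from B_rho_less_chain[OF this] obtain n \<xi> where ch: "\<forall>i\<le>n. \<xi> i \<in> M" "\<xi> 0 = z" "\<xi> n = u"
    "chain_cost \<rho> \<xi> n < ennreal \<delta>" by blast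
  define m where "m = (LEAST i. \<xi> i \<notin> S)"
  have out: "\<xi> n \<notin> S" using ch(3) u(1) by simp
  have m: "\<xi> m \<notin> S" "m \<le> n"
    unfolding m_def by (rule LeastI[of "\<lambda>i. \<xi> i \<notin> S", OF out], rule Least_le[of "\<lambda>i. \<xi> i \<notin> S", OF out])
  have "\<xi> i \<in> M1" if "i < m" for i
  proof -
    have "\<xi> i \<in> S" using not_less_Least[of i "\<lambda>i. \<xi> i \<notin> S"] that unfolding m_def by blast
    then show ?thesis using S_in_M1 by blast
  qed
  moreover have "chain_cost \<rho> \<xi> m \<le> chain_cost \<rho> \<xi> n"
    unfolding chain_cost_def by (rule sum_mono2) (use m(2) in auto)
  ultimately show ?thesis
    using ch m by (intro exI[of _ m] exI[of _ \<xi>]) auto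
qed

section \<open>Uniform escape from V\<close>

text \<open>Around every point of S the process leaves V, within a bounded number of steps,
  with probability at least exp(-delta/epsilon): combine a chain of cost below delta/2
  (cheap_exit_chain) with the large-deviation lower bound along it (chain_escape).\<close>
lemma local_escape:
  assumes z: "z \<in> S" and \<delta>: "\<delta> > 0"
  shows "\<exists>m r \<epsilon>0. r > 0 \<and> \<epsilon>0 > 0 \<and> (\<forall>\<epsilon> x. 0 < \<epsilon> \<and> \<epsilon> < \<epsilon>0 \<and> x \<in> ball z r \<inter> M \<longrightarrow>
      stay_prob (p \<epsilon>) V m x \<le> 1 - exp (- \<delta> / \<epsilon>))"
proof -
  obtain m \<xi> where ch: "\<xi> 0 = z" "\<forall>i\<le>m. \<xi> i \<in> M" "\<forall>i<m. \<xi> i \<in> M1" "\<xi> m \<notin> S"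
      "chain_cost \<rho> \<xi> m < ennreal (\<delta>/2)"
    using cheap_exit_chain[OF z, of "\<delta>/2"] \<delta> by auto
  define \<eta>' where "\<eta>' = \<delta> / (2 * (real m + 1))"
  have \<eta>': "\<eta>' > 0" "real m * \<eta>' \<le> \<delta>/2" unfolding \<eta>'_def using \<delta> by (auto simp: field_simps)
  have fin: "chain_cost \<rho> \<xi> m < \<top>" using ch(5) ennreal_less_top order.strict_trans by blast
  have cost: "enn2real (chain_cost \<rho> \<xi> m) < \<delta>/2"
    using enn2real_less_iff[OF fin, of "\<delta>/2"] ch(5) by blast
  obtain r \<epsilon>0 where r: "r > 0" "\<epsilon>0 > 0" and bound: "\<forall>\<epsilon> x. 0 < \<epsilon> \<and> \<epsilon> < \<epsilon>0 \<and> x \<in> ball z r \<inter> M \<longrightarrow>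
      stay_prob (p \<epsilon>) V m x \<le> 1 - exp (- (enn2real (chain_cost \<rho> \<xi> m) + real m * \<eta>') / \<epsilon>)"
    using chain_escape[OF V_borel V_sub_S S_closed \<eta>'(1) ch(2-4) fin] ch(1) by blast
  have "stay_prob (p \<epsilon>) V m x \<le> 1 - exp (- \<delta> / \<epsilon>)"
    if "0 < \<epsilon> \<and> \<epsilon> < \<epsilon>0 \<and> x \<in> ball z r \<inter> M" for \<epsilon> x
  proof -
    have "exp (- \<delta> / \<epsilon>) \<le> exp (- (enn2real (chain_cost \<rho> \<xi> m) + real m * \<eta>') / \<epsilon>)"
      using cost \<eta>'(2) that by (simp add: divide_simps)
    moreover have "stay_prob (p \<epsilon>) V m x \<le> 1 - exp (- (enn2real (chain_cost \<rho> \<xi> m) + real m * \<eta>') / \<epsilon>)"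
      using bound that by blast
    ultimately show ?thesis by linarith
  qed
  then show ?thesis using r by blast
qed

text \<open>By compactness of S finitely many of these neighbourhoods cover S \<supseteq> V; taking the
  largest number of steps gives a bound uniform over all starting points.\<close>
lemma uniform_escape:
  assumes \<delta>: "\<delta> > 0"
  shows "\<exists>L \<epsilon>0. \<epsilon>0 > 0 \<and> (\<forall>\<epsilon> x. 0 < \<epsilon> \<and> \<epsilon> < \<epsilon>0 \<longrightarrow>
    stay_prob (p \<epsilon>) V L x \<le> 1 - exp (- \<delta> / \<epsilon>))"
proof -
  obtain m r e where mre: "\<And>z. z \<in> S \<Longrightarrow> r z > 0 \<and> e z > 0"
    "\<And>z \<epsilon> x. z \<in> S \<Longrightarrow> 0 < \<epsilon> \<Longrightarrow> \<epsilon> < e z \<Longrightarrow> x \<in> ball z (r z) \<inter> M \<Longrightarrow>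
        stay_prob (p \<epsilon>) V (m z) x \<le> 1 - exp (- \<delta> / \<epsilon>)"
    using local_escape[OF _ \<delta>] by metis
  have "S \<subseteq> (\<Union>z\<in>S. ball z (r z))" using mre(1) by force
  then obtain T where T: "T \<subseteq> S" "finite T" "S \<subseteq> (\<Union>z\<in>T. ball z (r z))"
    using compactE_image[OF S_compact, of S "\<lambda>z. ball z (r z)"] by auto
  have "T \<noteq> {}"
    using T(3) Kj_in_M eta_pos basic_class_nonempty[OF Kj_class(1)] unfolding S_def by fastforce
  then have \<epsilon>0: "Min (e ` T) > 0" using T mre(1) by (subst Min_gr_iff) auto
  have "stay_prob (p \<epsilon>) V (Max (m ` T)) x \<le> 1 - exp (- \<delta> / \<epsilon>)"
    if \<epsilon>: "0 < \<epsilon>" "\<epsilon> < Min (e ` T)" for \<epsilon> x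
  proof -
    interpret stay_kernel "p \<epsilon>" V using p_stay_kernel \<epsilon> V_borel by blast
    show ?thesis
    proof (cases "x \<in> V")
      case False
      then show ?thesis using stay_prob_outside \<delta> \<epsilon> by (simp add: divide_simps)
    next
      case True
      then obtain z where z: "z \<in> T" "x \<in> ball z (r z)" using T(3) V_sub_S by blast
      have "stay_prob (p \<epsilon>) V (Max (m ` T)) x \<le> stay_prob (p \<epsilon>) V (m z) x"
        using T(2) z(1) by (intro stay_prob_antimono) auto
      also have "\<dots> \<le> 1 - exp (- \<delta> / \<epsilon>)"
      proof -
        have "Min (e ` T) \<le> e z" using T(2) z(1) by (intro Min_le) auto
        then show ?thesis
          using mre(2)[of z \<epsilon> x] z T(1) \<epsilon> True V_sub_S S_in_M1 M1_sub_M by (auto simp: dist_commute)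
      qed
      finally show ?thesis .
    qed
  qed
  then show ?thesis using \<epsilon>0 by blast
qed

section \<open>Exponentially long exit times are unlikely\<close>

text \<open>With escape probability q = exp(-gamma/(2 epsilon)) per block of L steps, surviving
  exp(gamma/epsilon) steps has probability at most exp(1 - (exp(gamma/(2 epsilon)) - 1)/L),
  which tends to 0 as epsilon tends to 0.\<close>
lemma exit_time_bound:
  assumes \<gamma>: "\<gamma> > 0"
  shows "\<exists>\<epsilon>0>0. \<exists>\<zeta> :: real \<Rightarrow> real.
           (\<forall>\<epsilon>. 0 < \<epsilon> \<and> \<epsilon> < \<epsilon>0 \<longrightarrow> \<zeta> \<epsilon> \<in> {0..1}) \<and>
           (\<zeta> \<longlongrightarrow> 0) (at_right 0) \<and>
           (\<forall>\<epsilon>. 0 < \<epsilon> \<and> \<epsilon> < \<epsilon>0 \<longrightarrow>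
              (\<forall>x\<in>V. exit_later (p \<epsilon>) V (exp (\<gamma> / \<epsilon>)) x \<le> \<zeta> \<epsilon>))"
proof -
  obtain L0 \<epsilon>0 where \<epsilon>0: "\<epsilon>0 > 0" and escape: "\<forall>\<epsilon> x. 0 < \<epsilon> \<and> \<epsilon> < \<epsilon>0 \<longrightarrow>
      stay_prob (p \<epsilon>) V L0 x \<le> 1 - exp (- (\<gamma>/2) / \<epsilon>)"
    using uniform_escape[of "\<gamma>/2"] \<gamma> by auto
  define L where "L = Suc L0"
  define \<zeta> where "\<zeta> = (\<lambda>\<epsilon>::real. min 1 (exp (1 - (exp (\<gamma> / (2 * \<epsilon>)) - 1) / real L)))"
  have "((\<lambda>\<epsilon>::real. exp (1 - (exp (\<gamma> / (2 * \<epsilon>)) - 1) / real L)) \<longlongrightarrow> 0) (at_right 0)"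
    using \<gamma> unfolding L_def by real_asymp
  then have "((\<lambda>\<epsilon>. min 1 (exp (1 - (exp (\<gamma> / (2 * \<epsilon>)) - 1) / real L))) \<longlongrightarrow> min 1 0)
      (at_right 0)"
    by (intro tendsto_min tendsto_const)
  then have lim: "(\<zeta> \<longlongrightarrow> 0) (at_right 0)" unfolding \<zeta>_def by simp
  have "exit_later (p \<epsilon>) V (exp (\<gamma> / \<epsilon>)) x \<le> \<zeta> \<epsilon>" if \<epsilon>: "0 < \<epsilon>" "\<epsilon> < \<epsilon>0" for \<epsilon> x
  proof -
    interpret stay_kernel "p \<epsilon>" V using p_stay_kernel \<epsilon> V_borel by blast
    have "stay_prob (p \<epsilon>) V L y \<le> 1 - exp (- (\<gamma>/2) / \<epsilon>)" for y
    proof -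
      have "stay_prob (p \<epsilon>) V L y \<le> stay_prob (p \<epsilon>) V L0 y"
        by (rule stay_prob_antimono) (simp add: L_def)
      also have "\<dots> \<le> 1 - exp (- (\<gamma>/2) / \<epsilon>)" using escape \<epsilon> by blast
      finally show ?thesis .
    qed
    then have "stay_prob (p \<epsilon>) V (nat \<lfloor>exp (\<gamma> / \<epsilon>)\<rfloor>) x
        \<le> exp (1 - (exp (\<gamma> / (2 * \<epsilon>)) - 1) / real L)"
      using \<gamma> \<epsilon> by (intro stay_prob_exponential_time) (auto simp: L_def)
    then show ?thesis
      using stay_prob_le_1 unfolding exit_later_def \<zeta>_def by simp
  qed
  moreover have "\<zeta> \<epsilon> \<in> {0..1}" for \<epsilon> unfolding \<zeta>_def by auto
  ultimately show ?thesis using \<epsilon>0 lim by blast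
qed

end

theorem mainTheorem15:
  fixes M M0 M1 :: "(real^'n) set"
    and F :: "real^'n \<Rightarrow> real^'n"
    and p :: "real \<Rightarrow> real^'n \<Rightarrow> (real^'n) measure"
    and \<rho> :: "real^'n \<Rightarrow> real^'n \<Rightarrow> ennreal"
    and Kj :: "(real^'n) set"
  assumes M_closed: "closed M"
    and M_split: "M = M0 \<union> M1" "M0 \<inter> M1 = {}"
    and M0_closed: "closed M0"
    and F_maps: "F ` M \<subseteq> M" "F ` M0 \<subseteq> M0" "F ` M1 \<subseteq> M1"
    and F_cont: "continuous_on M F"
    and F_bdd: "bounded (F ` M)"
    and p_prob: "\<And>\<epsilon> x. \<epsilon> > 0 \<Longrightarrow> x \<in> M \<Longrightarrow> prob_space (p \<epsilon> x)"
    and p_sets: "\<And>\<epsilon> x. \<epsilon> > 0 \<Longrightarrow> sets (p \<epsilon> x) = sets borel"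
    and p_meas: "\<And>\<epsilon>. \<epsilon> > 0 \<Longrightarrow> p \<epsilon> \<in> borel \<rightarrow>\<^sub>M subprob_algebra borel"
    and p_support: "\<And>\<epsilon> x. \<epsilon> > 0 \<Longrightarrow> x \<in> M \<Longrightarrow> emeasure (p \<epsilon> x) M = 1"
    and p_M0: "\<And>\<epsilon> x. \<epsilon> > 0 \<Longrightarrow> x \<in> M0 \<Longrightarrow> emeasure (p \<epsilon> x) M1 = 0"
    \<comment> \<open>Hypothesis (LD)\<close>
    and LD_i: "continuous_on (M1 \<times> M) (\<lambda>(x, y). \<rho> x y)"
    and LD_ii: "\<And>x y. x \<in> M \<Longrightarrow> y \<in> M \<Longrightarrow> \<rho> x y = 0 \<longleftrightarrow> y = F x"
    and LD_iii: "\<And>\<beta>. \<beta> > 0 \<Longrightarrow>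
        0 < (INF (x, y)\<in>{(x, y). x \<in> M \<and> y \<in> M \<and> dmax (F x) y > \<beta>}. \<rho> x y)"
    and LD_iv: "\<And>K c r \<eta>. compact K \<Longrightarrow> K \<subseteq> M1 \<Longrightarrow> c \<in> M \<Longrightarrow> r > 0 \<Longrightarrow> \<eta> > 0 \<Longrightarrow>
        \<exists>\<epsilon>0>0. \<forall>x\<in>K. \<forall>\<epsilon>. 0 < \<epsilon> \<and> \<epsilon> < \<epsilon>0 \<longrightarrow>
          ((INF y\<in>ball c r \<inter> M. \<rho> x y) < \<top> \<longrightarrow>
            emeasure (p \<epsilon> x) (ball c r \<inter> M)
              \<ge> ennreal (exp (- (enn2real (INF y\<in>ball c r \<inter> M. \<rho> x y) + \<eta>) / \<epsilon>)))"
    and LD_v: "\<And>C \<eta>. closed C \<Longrightarrow> C \<subseteq> M \<Longrightarrow> \<eta> > 0 \<Longrightarrow>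
        \<exists>\<epsilon>0>0. \<forall>x\<in>M. \<forall>\<epsilon>. 0 < \<epsilon> \<and> \<epsilon> < \<epsilon>0 \<longrightarrow>
          ((INF y\<in>C. \<rho> x y) = \<top> \<longrightarrow> emeasure (p \<epsilon> x) C = 0) \<and>
          ((INF y\<in>C. \<rho> x y) < \<top> \<longrightarrow>
            emeasure (p \<epsilon> x) C \<le> ennreal (exp ((\<eta> - enn2real (INF y\<in>C. \<rho> x y)) / \<epsilon>)))"
    \<comment> \<open>finitely many closed basic classes in M1\<close>
    and classes_fin: "finite {K. basic_class M \<rho> K \<and> K \<subseteq> M1}"
    and classes_closed: "\<And>K. basic_class M \<rho> K \<Longrightarrow> K \<subseteq> M1 \<Longrightarrow> closed K"
    and Kj_class: "basic_class M \<rho> Kj" "Kj \<subseteq> M1"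
    and Kj_not_qa: "\<not> quasiattractor M \<rho> Kj"
  shows "\<exists>\<eta>>0. \<forall>\<gamma>>0. \<exists>\<epsilon>0>0. \<exists>\<zeta> :: real \<Rightarrow> real.
           (\<forall>\<epsilon>. 0 < \<epsilon> \<and> \<epsilon> < \<epsilon>0 \<longrightarrow> \<zeta> \<epsilon> \<in> {0..1}) \<and>
           (\<zeta> \<longlongrightarrow> 0) (at_right 0) \<and>
           (\<forall>\<epsilon>. 0 < \<epsilon> \<and> \<epsilon> < \<epsilon>0 \<longrightarrow>
              (\<forall>x\<in>nbhd M \<eta> Kj.
                 exit_later (p \<epsilon>) (nbhd M \<eta> Kj) (exp (\<gamma> / \<epsilon>)) x \<le> \<zeta> \<epsilon>))"
proof -
  interpret nonattracting_class M M0 M1 F p \<rho> Kj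
    by (intro nonattracting_class.intro ld_system.intro nonattracting_class_axioms.intro; fact assms)
  obtain \<eta> where "\<eta> > 0" "\<forall>x\<in>M. infdist x Kj \<le> \<eta> \<longrightarrow>
      x \<in> M1 \<and> (\<forall>K. basic_class M \<rho> K \<and> K \<subseteq> M1 \<and> K \<noteq> Kj \<longrightarrow> x \<notin> K)"
    using isolating_radius by blast
  then interpret isolating_nbhd M M0 M1 F p \<rho> Kj \<eta>
    by unfold_locales auto
  show ?thesis using exit_time_bound \<open>\<eta> > 0\<close> by blast
qed

end
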